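(* Let $y_0,z_0\in\mathbb{R}^n$ be row vectors with $y_0[i]\ge0$, $z_0[i]\ge0$ for $i\in\mathcal{V}$, $y_0[(i,j)]=z_0[(i,j)]=0$ for $(i,j)\in\mathcal{E}$, and $\sum_j z_0[j]>0$, and define $y_k=y_{k-1}M_k$, $z_k=z_{k-1}M_k$ for $k\ge1$ (same $M_k$ in both). Let $\mu_z$ satisfy $0<\mu_z\le\sum_j z_0[j]$, let $c=\min\{M[a,b]: M\in\mathcal{M},\,M[a,b]>0\}$, let $l$ be a positive integer such that for every $i\in\mathcal{V}$ there exist $l$ matrices in $\mathcal{M}$ (possibly repeated) whose product, in some order, has all entries of its column indexed by $i$ strictly positive, and set $\mu=\mu_z c^l/n$. For $i\in\mathcal{V}$, let $\tau_i^1<\tau_i^2<\cdots$ be the successive times $k$ at which $z_k[i]\ge\mu$, and let $\pi_i[t]=y_{\tau_i^t}[i]/z_{\tau_i^t}[i]$. Then for each $i\in\mathcal{V}$, with probability $1$, $\pi_i[t]$ converges as $t\to\infty$ to $\pi^*=\dfrac{\sum_j y_0[j]}{\sum_j z_0[j]}$.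
   Context: Let $\mathcal{G}=(\mathcal{V},\mathcal{E})$ be a strongly connected directed graph with $\mathcal{V}=\{1,\dots,m\}$, with a self-loop $(i,i)\in\mathcal{E}$ at every node. Let $\mathcal{O}_i=\{j:(i,j)\in\mathcal{E}\}$ and $D_i=|\mathcal{O}_i|$. At each time step $k\ge1$ each link $(i,j)\in\mathcal{E}$ is reliable with probability $q_{ij}\in(0,1]$, independently across links and across time steps; let $X_k[i,j]=1$ if $(i,j)$ is reliable at step $k$ and $0$ otherwise. Let $n=m+|\mathcal{E}|$ and index vector entries and rows/columns of $n\times n$ matrices by $\mathcal{V}\cup\mathcal{E}$ (each link $(i,j)$ is an additional "virtual buffer" index). The random matrix $M_k$ is defined by: for $i\in\mathcal{V}$ and $(i,j)\in\mathcal{E}$, $M_k[i,j]=X_k[i,j]/D_i$ and $M_k[i,(i,j)]=(1-X_k[i,j])/D_i$, all other entries of row $i$ being $0$; for $(i,j)\in\mathcal{E}$, $M_k[(i,j),j]=X_k[i,j]$ and $M_k[(i,j),(i,j)]=1-X_k[i,j]$, all other entries of row $(i,j)$ being $0$. $\mathcal{M}$ denotes the finite set of all $2^{|\mathcal{E}|}$ matrices obtainable this way. The sums $\sum_j$ over $y_0,z_0$ range over all $n$ indices (equivalently over $\mathcal{V}$). The times $\tau_i^t$ are well defined (infinitely many) with probability $1$. *)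

theory Defs
  imports "HOL-Probability.Probability"
begin

text \<open>Indices of vectors / matrices: nodes \<open>Inl i\<close> and virtual buffers \<open>Inr (i,j)\<close>.\<close>

type_synonym 'v idx = "'v + ('v \<times> 'v)"

definition Idx :: "'v set \<Rightarrow> ('v \<times> 'v) set \<Rightarrow> 'v idx set" where
  "Idx V E = Inl ` V \<union> Inr ` E"

definition outdeg :: "('v \<times> 'v) set \<Rightarrow> 'v \<Rightarrow> nat" where
  "outdeg E i = card {j. (i, j) \<in> E}"

text \<open>The matrix \<open>M\<close> determined by a link-reliability pattern \<open>x\<close> (x e = True iff link e reliable).\<close>

fun Mmat :: "('v \<times> 'v) set \<Rightarrow> (('v \<times> 'v) \<Rightarrow> bool) \<Rightarrow> 'v idx \<Rightarrow> 'v idx \<Rightarrow> real" where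
  "Mmat E x (Inl i) (Inl j) =
     (if (i, j) \<in> E then of_bool (x (i, j)) / real (outdeg E i) else 0)"
| "Mmat E x (Inl i) (Inr (i', j)) =
     (if i' = i \<and> (i, j) \<in> E then (1 - of_bool (x (i, j))) / real (outdeg E i) else 0)"
| "Mmat E x (Inr (i, j)) (Inl j') =
     (if (i, j) \<in> E \<and> j' = j then of_bool (x (i, j)) else 0)"
| "Mmat E x (Inr (i, j)) (Inr e') =
     (if (i, j) \<in> E \<and> e' = (i, j) then 1 - of_bool (x (i, j)) else 0)"

definition Mset :: "('v \<times> 'v) set \<Rightarrow> ('v idx \<Rightarrow> 'v idx \<Rightarrow> real) set" where
  "Mset E = range (Mmat E)"

definition vecmat :: "'i set \<Rightarrow> ('i \<Rightarrow> real) \<Rightarrow> ('i \<Rightarrow> 'i \<Rightarrow> real) \<Rightarrow> 'i \<Rightarrow> real" where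
  "vecmat I y A = (\<lambda>b. \<Sum>a\<in>I. y a * A a b)"

definition matmul :: "'i set \<Rightarrow> ('i \<Rightarrow> 'i \<Rightarrow> real) \<Rightarrow> ('i \<Rightarrow> 'i \<Rightarrow> real) \<Rightarrow> 'i \<Rightarrow> 'i \<Rightarrow> real" where
  "matmul I A B = (\<lambda>a b. \<Sum>c\<in>I. A a c * B c b)"

definition idmat :: "'i \<Rightarrow> 'i \<Rightarrow> real" where
  "idmat = (\<lambda>a b. of_bool (a = b))"

definition matprod_list :: "'i set \<Rightarrow> ('i \<Rightarrow> 'i \<Rightarrow> real) list \<Rightarrow> 'i \<Rightarrow> 'i \<Rightarrow> real" where
  "matprod_list I Ms = foldr (matmul I) Ms idmat"

fun traj :: "'v set \<Rightarrow> ('v \<times> 'v) set \<Rightarrow> (nat \<Rightarrow> ('v \<times> 'v) \<Rightarrow> bool) \<Rightarrow> ('v idx \<Rightarrow> real)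
             \<Rightarrow> nat \<Rightarrow> 'v idx \<Rightarrow> real" where
  "traj V E X y0 0 = y0"
| "traj V E X y0 (Suc k) = vecmat (Idx V E) (traj V E X y0 k) (Mmat E (X (Suc k)))"

definition cmin :: "'v set \<Rightarrow> ('v \<times> 'v) set \<Rightarrow> real" where
  "cmin V E = Min {M a b | M a b. M \<in> Mset E \<and> a \<in> Idx V E \<and> b \<in> Idx V E \<and> M a b > 0}"

end

theory Submission
  imports Defs
begin

text \<open>Both runs are driven by the same matrices, so by linearity \<open>y\<^sub>k - \<pi>\<^sup>* z\<^sub>k\<close> is the run
  started from \<open>y\<^sub>0 - \<pi>\<^sup>* z\<^sub>0\<close>, a vector whose entries sum to zero. The matrices are
  row-stochastic, so no step increases the \<open>\<ell>\<^sub>1\<close>-norm of this error. A window of \<open>l\<close> steps in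
  which every link is reliable sends at least a fraction \<open>c\<^sup>l/n\<close> of the mass of any
  nonnegative vector to every node: the all-reliable matrix simulates any positive product of
  \<open>l\<close> obtainable matrices, since it releases buffered mass at once. Applied to the positive
  and negative parts of the error, this contracts its norm by the factor \<open>1 - c\<^sup>l/n\<close>, and
  applied to \<open>z\<close> it lifts \<open>z\<^sub>k[i]\<close> above \<open>\<mu>\<close>. By independence and the Borel 0-1 law, almost
  surely infinitely many such windows occur, so the error tends to zero, the times \<open>\<tau>\<^sub>i\<^sup>t\<close>
  exist, and \<open>|\<pi>\<^sub>i[t] - \<pi>\<^sup>*|\<close> is at most the error norm divided by \<open>\<mu>\<close>.\<close>

section \<open>Limits of real sequences\<close>

lemma tendsto_zero_if_contracts_infinitely_often:
  fixes N :: "nat \<Rightarrow> real"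
  assumes dec: "decseq N" and nonneg: "\<And>k. N k \<ge> 0" and \<rho>: "0 \<le> \<rho>" "\<rho> < 1"
    and contr: "infinite {k. N (k + l) \<le> \<rho> * N k}"
  shows "N \<longlonglongrightarrow> 0"
proof -
  have geometric: "\<exists>K. N K \<le> \<rho> ^ m * N 0" for m
  proof (induction m)
    case 0
    show ?case by auto
  next
    case (Suc m)
    then obtain K where K: "N K \<le> \<rho> ^ m * N 0" by blast
    obtain k where k: "k \<ge> K" "N (k + l) \<le> \<rho> * N k"
      using contr by (auto simp: infinite_nat_iff_unbounded_le)
    note k(2)
    also have "\<dots> \<le> \<rho> * N K"
      using k dec \<rho> by (simp add: decseqD mult_left_mono)
    also have "\<dots> \<le> \<rho> ^ Suc m * N 0" using K \<rho> by (simp add: mult_left_mono mult.assoc)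
    finally show ?case by blast
  qed
  show ?thesis
  proof (rule LIMSEQ_I)
    fix r :: real assume "r > 0"
    have "(\<lambda>m. \<rho> ^ m * N 0) \<longlonglongrightarrow> 0"
      using \<rho> by (intro tendsto_mult_left_zero LIMSEQ_power_zero) auto
    from LIMSEQ_D[OF this \<open>r > 0\<close>] obtain m where "norm (\<rho> ^ m * N 0 - 0) < r" by blast
    moreover obtain K where "N K \<le> \<rho> ^ m * N 0" using geometric by blast
    ultimately have "N k < r" if "k \<ge> K" for k
      using decseqD[OF dec that] by (simp add: abs_less_iff)
    then show "\<exists>K. \<forall>k\<ge>K. norm (N k - 0) < r" using nonneg by auto
  qed
qed

lemma tendsto_ratio_along_enumerate:
  fixes y z :: "nat \<Rightarrow> real"
  assumes S: "infinite S" and \<mu>: "0 < \<mu>" "\<And>k. k \<in> S \<Longrightarrow> \<mu> \<le> z k"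
    and err: "(\<lambda>k. y k - \<pi> * z k) \<longlonglongrightarrow> 0"
  shows "(\<lambda>t. y (enumerate S t) / z (enumerate S t)) \<longlonglongrightarrow> \<pi>"
proof -
  let ?\<tau> = "enumerate S"
  have z\<tau>: "\<mu> \<le> z (?\<tau> t)" for t using \<mu>(2) enumerate_in_set[OF S] by blast
  have err\<tau>: "(\<lambda>t. \<bar>y (?\<tau> t) - \<pi> * z (?\<tau> t)\<bar> / \<mu>) \<longlonglongrightarrow> 0"
    using LIMSEQ_subseq_LIMSEQ[OF err strict_mono_enumerate[OF S]]
    by (intro tendsto_divide_zero tendsto_rabs_zero) (simp add: comp_def)
  have "norm (y (?\<tau> t) / z (?\<tau> t) - \<pi>) \<le> \<bar>y (?\<tau> t) - \<pi> * z (?\<tau> t)\<bar> / \<mu>" for t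
  proof -
    have "z (?\<tau> t) > 0" using z\<tau>[of t] \<mu>(1) by linarith
    then have "norm (y (?\<tau> t) / z (?\<tau> t) - \<pi>) = \<bar>y (?\<tau> t) - \<pi> * z (?\<tau> t)\<bar> / z (?\<tau> t)"
      by (simp add: field_simps)
    also have "\<dots> \<le> \<bar>y (?\<tau> t) - \<pi> * z (?\<tau> t)\<bar> / \<mu>"
      by (intro frac_le) (use z\<tau>[of t] \<mu>(1) in auto)
    finally show ?thesis .
  qed
  then have "(\<lambda>t. y (?\<tau> t) / z (?\<tau> t) - \<pi>) \<longlonglongrightarrow> 0"
    by (intro Lim_null_comparison[OF _ err\<tau>]) auto
  then show ?thesis by (rule LIM_zero_cancel)
qed

section \<open>Stochastic matrices and the \<open>\<ell>\<^sub>1\<close>-norm\<close>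

lemma l1_contraction_of_zero_sum:
  fixes T :: "('i \<Rightarrow> real) \<Rightarrow> 'i \<Rightarrow> real"
  assumes I: "finite I" "b\<^sub>0 \<in> I"
    and T_diff: "\<And>u v. T (\<lambda>a. u a - v a) = (\<lambda>b. T u b - T v b)"
    and T_sum: "\<And>u. (\<Sum>b\<in>I. T u b) = (\<Sum>a\<in>I. u a)"
    and T_nonneg: "\<And>u b. \<forall>a\<in>I. u a \<ge> 0 \<Longrightarrow> b \<in> I \<Longrightarrow> T u b \<ge> 0"
    and T_spread: "\<And>u. \<forall>a\<in>I. u a \<ge> 0 \<Longrightarrow> T u b\<^sub>0 \<ge> \<delta> * (\<Sum>a\<in>I. u a)"
    and w: "(\<Sum>a\<in>I. w a) = 0"
  shows "(\<Sum>b\<in>I. \<bar>T w b\<bar>) \<le> (1 - \<delta>) * (\<Sum>a\<in>I. \<bar>w a\<bar>)"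
proof -
  define u where "u = (\<lambda>a. max (w a) 0)"
  define v where "v = (\<lambda>a. max (- w a) 0)"
  have "w = (\<lambda>a. u a - v a)" by (auto simp: u_def v_def)
  then have Tw: "T w = (\<lambda>b. T u b - T v b)" using T_diff by metis
  define s where "s = (\<Sum>a\<in>I. u a)"
  have sum_v: "(\<Sum>a\<in>I. v a) = s"
    using w \<open>w = _\<close> by (simp add: s_def sum_subtractf)
  have uv_nonneg: "\<forall>a\<in>I. u a \<ge> 0" "\<forall>a\<in>I. v a \<ge> 0" by (auto simp: u_def v_def)
  have abs_w: "(\<Sum>a\<in>I. \<bar>w a\<bar>) = 2 * s"
  proof -
    have "\<bar>w a\<bar> = u a + v a" for a by (auto simp: u_def v_def)
    then show ?thesis by (simp add: sum.distrib sum_v s_def)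
  qed
  \<comment> \<open>positive and negative parts overlap at \<open>b\<^sub>0\<close>, where they partly cancel\<close>
  have abs_diff: "\<bar>p - q\<bar> = p + q - 2 * min p q" for p q :: real by (auto simp: min_def)
  have "(\<Sum>b\<in>I. \<bar>T w b\<bar>) = 2 * s - 2 * (\<Sum>b\<in>I. min (T u b) (T v b))"
    by (simp add: Tw abs_diff sum_subtractf sum.distrib T_sum sum_v sum_distrib_left s_def)
  also have "\<dots> \<le> 2 * s - 2 * min (T u b\<^sub>0) (T v b\<^sub>0)"
    using T_nonneg[OF uv_nonneg(1)] T_nonneg[OF uv_nonneg(2)] I
    by (simp, intro member_le_sum) auto
  also have "\<dots> \<le> 2 * s - 2 * (\<delta> * s)"
    using T_spread[OF uv_nonneg(1)] T_spread[OF uv_nonneg(2)] by (simp add: s_def sum_v)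
  finally show ?thesis by (simp add: abs_w algebra_simps)
qed

lemma sum_vecmat_stochastic:
  assumes "finite I" "\<And>a. a \<in> I \<Longrightarrow> (\<Sum>b\<in>I. A a b) = 1"
  shows "(\<Sum>b\<in>I. vecmat I y A b) = (\<Sum>a\<in>I. y a)"
proof -
  have "(\<Sum>b\<in>I. vecmat I y A b) = (\<Sum>a\<in>I. y a * (\<Sum>b\<in>I. A a b))"
    unfolding vecmat_def by (subst sum.swap) (simp add: sum_distrib_left)
  then show ?thesis using assms(2) by simp
qed

lemma l1_vecmat_stochastic_le:
  assumes "finite I" "\<And>a b. a \<in> I \<Longrightarrow> b \<in> I \<Longrightarrow> A a b \<ge> 0"
    and "\<And>a. a \<in> I \<Longrightarrow> (\<Sum>b\<in>I. A a b) = 1"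
  shows "(\<Sum>b\<in>I. \<bar>vecmat I y A b\<bar>) \<le> (\<Sum>a\<in>I. \<bar>y a\<bar>)"
proof -
  have "(\<Sum>b\<in>I. \<bar>vecmat I y A b\<bar>) \<le> (\<Sum>b\<in>I. \<Sum>a\<in>I. \<bar>y a\<bar> * A a b)"
    unfolding vecmat_def using assms(2)
    by (intro sum_mono order_trans[OF sum_abs]) (simp add: abs_mult)
  also have "\<dots> = (\<Sum>a\<in>I. \<bar>y a\<bar> * (\<Sum>b\<in>I. A a b))"
    by (subst sum.swap) (simp add: sum_distrib_left)
  finally show ?thesis using assms(3) by simp
qed

section \<open>Independent events\<close>

lemma (in prob_space) AE_infinitely_often_indep_events:
  fixes P :: "nat \<Rightarrow> 'a \<Rightarrow> bool"
  assumes indep: "indep_events (\<lambda>m. {x\<in>space M. P m x}) UNIV"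
    and prob: "\<And>m. prob {x\<in>space M. P m x} \<ge> p" and "p > 0"
  shows "AE x in M. infinite {m. P m x}"
proof -
  let ?F = "\<lambda>m. {x\<in>space M. P m x}"
  have ev: "?F m \<in> events" for m using indep by (auto simp: indep_events_def)
  have "decseq (\<lambda>n. \<Union>m\<in>{n..}. ?F m)"
    by (rule decseq_SucI) (auto intro: Suc_leD)
  then have "(\<lambda>n. prob (\<Union>m\<in>{n..}. ?F m)) \<longlonglongrightarrow> prob (\<Inter>n. \<Union>m\<in>{n..}. ?F m)"
    using ev by (intro finite_Lim_measure_decseq) auto
  moreover have "p \<le> prob (\<Union>m\<in>{n..}. ?F m)" for n
  proof -
    have "prob (?F n) \<le> prob (\<Union>m\<in>{n..}. ?F m)"
      using ev by (intro finite_measure_mono) auto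
    then show ?thesis using prob[of n] by linarith
  qed
  ultimately have "prob (\<Inter>n. \<Union>m\<in>{n..}. ?F m) \<ge> p" by (intro LIMSEQ_le_const) auto
  then have "prob (\<Inter>n. \<Union>m\<in>{n..}. ?F m) = 1" using borel_0_1_law[OF indep] \<open>p > 0\<close> by auto
  moreover have "(\<Inter>n. \<Union>m\<in>{n..}. ?F m) = {x\<in>space M. infinite {m. P m x}}"
    by (auto simp: infinite_nat_iff_unbounded_le)
  ultimately show ?thesis using ev by (subst (asm) prob_eq_1) auto
qed

lemma (in prob_space) prob_all_indep_vars:
  fixes Y :: "'i \<Rightarrow> 'a \<Rightarrow> bool"
  assumes indep: "indep_vars (\<lambda>_. count_space UNIV) Y J"
    and K: "K \<subseteq> J" "finite K" "K \<noteq> {}"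
  shows "prob {\<omega>\<in>space M. \<forall>i\<in>K. Y i \<omega>} = (\<Prod>i\<in>K. prob {\<omega>\<in>space M. Y i \<omega>})"
proof -
  have "{\<omega>\<in>space M. \<forall>i\<in>K. Y i \<omega>} = (\<Inter>i\<in>K. Y i -` {True} \<inter> space M)"
    using K(3) by auto
  moreover have "Y i -` {True} \<inter> space M = {\<omega>\<in>space M. Y i \<omega>}" for i by auto
  ultimately show ?thesis
    using indep_varsD[OF indep K(3,2,1), of "\<lambda>_. {True}"] by simp
qed

lemma (in prob_space) indep_events_all_on_blocks:
  fixes Y :: "'i \<Rightarrow> 'a \<Rightarrow> bool" and K :: "'j \<Rightarrow> 'i set"
  assumes indep: "indep_vars (\<lambda>_. count_space UNIV) Y J"
    and K: "\<And>j. K j \<subseteq> J" "\<And>j. finite (K j)" "disjoint_family K"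
  shows "indep_events (\<lambda>j. {\<omega>\<in>space M. \<forall>i\<in>K j. Y i \<omega>}) UNIV"
proof -
  let ?B = "\<lambda>j. PiM (K j) (\<lambda>_. count_space (UNIV :: bool set))"
  have "indep_vars ?B (\<lambda>j \<omega>. restrict (\<lambda>i. Y i \<omega>) (K j)) UNIV"
    using K by (intro indep_vars_restrict[OF indep]) auto
  moreover have "{f\<in>space (?B j). \<forall>i\<in>K j. f i} \<in> sets (?B j)" for j
  proof -
    have "{f\<in>space (?B j). \<forall>i\<in>K j. f i} = PiE (K j) (\<lambda>_. {True})"
      unfolding space_PiM PiE_iff by (auto intro!: extensionalityI[where A="K j"])
    then show ?thesis
      using sets_PiM_I_finite[of "K j" "\<lambda>_. {True}" "\<lambda>_. count_space UNIV"] K(2) by simp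
  qed
  ultimately have "indep_events (\<lambda>j. {\<omega>\<in>space M. \<forall>i\<in>K j. restrict (\<lambda>i. Y i \<omega>) (K j) i}) UNIV"
    by (rule indep_eventsI_indep_vars)
  then show ?thesis by simp
qed

section \<open>Matrices of the lossy network\<close>

definition Mreliable :: "('v \<times> 'v) set \<Rightarrow> 'v idx \<Rightarrow> 'v idx \<Rightarrow> real" where
  "Mreliable E = Mmat E (\<lambda>_. True)"

definition reliable_windows :: "('v \<times> 'v) set \<Rightarrow> nat \<Rightarrow> (nat \<Rightarrow> ('v \<times> 'v) \<Rightarrow> bool) \<Rightarrow> nat set" where
  "reliable_windows E l X = {k. \<forall>t\<in>{1..l}. \<forall>e\<in>E. X (k + t) e}"

fun pos_walk :: "'i set \<Rightarrow> ('i \<Rightarrow> 'i \<Rightarrow> real) \<Rightarrow> nat \<Rightarrow> 'i \<Rightarrow> 'i \<Rightarrow> bool" where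
  "pos_walk I A 0 a b = (a = b)"
| "pos_walk I A (Suc s) a b = (\<exists>a'\<in>I. A a a' > 0 \<and> pos_walk I A s a' b)"

lemma Mmat_nonneg: "Mmat E x a b \<ge> 0"
  by (cases "(E, x, a, b)" rule: Mmat.cases) auto

lemma Mmat_all_reliable:
  assumes "\<forall>e\<in>E. x e"
  shows "Mmat E x = Mreliable E"
  unfolding Mreliable_def
proof (intro ext)
  fix a b show "Mmat E x a b = Mmat E (\<lambda>_. True) a b"
    using assms by (cases "(E, x, a, b)" rule: Mmat.cases) auto
qed

lemma Mmat_pos_cases:
  assumes "Mmat E x a b > 0"
  obtains u v where "(u, v) \<in> E" "a = Inl u \<or> a = Inr (u, v)" "b = Inl v \<or> b = Inr (u, v)"
  using assms by (cases "(E, x, a, b)" rule: Mmat.cases) (auto split: if_splits)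

lemma Mreliable_in_Mset: "Mreliable E \<in> Mset E"
  by (simp add: Mreliable_def Mset_def)

lemma Mreliable_buffer_release: "(u, v) \<in> E \<Longrightarrow> Mreliable E (Inr (u, v)) (Inl v) = 1"
  by (simp add: Mreliable_def)

lemma Mreliable_buffer_pos: "Mreliable E (Inr (u, v)) b > 0 \<Longrightarrow> b = Inl v"
  by (cases b) (auto simp: Mreliable_def split: if_splits)

lemma Mmat_values: "Mmat E x a b \<in> {0, 1} \<union> (\<lambda>i. 1 / real (outdeg E i)) ` {i. a = Inl i}"
  by (cases "(E, x, a, b)" rule: Mmat.cases) auto

lemma matprod_list_nonneg: "set Ms \<subseteq> Mset E \<Longrightarrow> matprod_list I Ms a b \<ge> 0"
proof (induction Ms arbitrary: a b)
  case Nil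
  then show ?case by (simp add: matprod_list_def idmat_def)
next
  case (Cons M Ms)
  then obtain x where "M = Mmat E x" by (auto simp: Mset_def)
  with Cons show ?case
    by (auto simp: matprod_list_def matmul_def Mmat_nonneg intro!: sum_nonneg)
qed

lemma traj_shift: "traj V E X y (k + s) = traj V E (\<lambda>t. X (k + t)) (traj V E X y k) s"
  by (induction s) auto

lemma traj_linear:
  "traj V E X (\<lambda>a. y a - r * z a) k = (\<lambda>a. traj V E X y k a - r * traj V E X z k a)"
  by (induction k)
    (simp_all add: vecmat_def left_diff_distrib sum_subtractf sum_distrib_left mult.assoc)

lemma traj_nonneg:
  "\<forall>a\<in>Idx V E. y a \<ge> 0 \<Longrightarrow> b \<in> Idx V E \<Longrightarrow> traj V E X y k b \<ge> 0"
  by (induction k arbitrary: b) (auto simp: vecmat_def Mmat_nonneg intro!: sum_nonneg)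

lemma traj_all_reliable:
  "\<forall>t\<in>{1..s}. \<forall>e\<in>E. X t e \<Longrightarrow> traj V E X y s = traj V E (\<lambda>_ _. True) y s"
  by (induction s) (auto simp: Mmat_all_reliable)

lemma traj_reliable_window:
  "k \<in> reliable_windows E l X \<Longrightarrow>
     traj V E X y (k + l) = traj V E (\<lambda>_ _. True) (traj V E X y k) l"
  unfolding reliable_windows_def traj_shift
  by (rule traj_all_reliable) auto

locale lossy_network =
  fixes V :: "'v set" and E :: "('v \<times> 'v) set"
  assumes finite_V: "finite V" and V_nonempty: "V \<noteq> {}"
    and E_subset: "E \<subseteq> V \<times> V" and self_loops: "\<And>i. i \<in> V \<Longrightarrow> (i, i) \<in> E"
begin

lemma finite_E: "finite E"
  using finite_subset[OF E_subset] finite_V by blast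

lemma finite_Idx: "finite (Idx V E)"
  using finite_V finite_E by (simp add: Idx_def)

lemma Inl_in_Idx: "i \<in> V \<Longrightarrow> Inl i \<in> Idx V E"
  by (simp add: Idx_def)

lemma card_Idx_pos: "card (Idx V E) > 0"
  using V_nonempty finite_Idx by (auto simp: Idx_def card_gt_0_iff)

lemma sum_Idx:
  "(\<Sum>b\<in>Idx V E. f b) = (\<Sum>j\<in>V. f (Inl j)) + (\<Sum>u\<in>V. \<Sum>v\<in>V. if (u, v) \<in> E then f (Inr (u, v)) else 0)"
proof -
  have "(\<Sum>b\<in>Idx V E. f b) = (\<Sum>j\<in>V. f (Inl j)) + (\<Sum>e\<in>E. f (Inr e))"
    unfolding Idx_def using finite_V finite_E
    by (subst sum.union_disjoint) (auto simp: sum.reindex)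
  also have "(\<Sum>e\<in>E. f (Inr e)) = (\<Sum>(u, v)\<in>V \<times> V. if (u, v) \<in> E then f (Inr (u, v)) else 0)"
    using E_subset finite_V by (intro sum.mono_neutral_cong_left) auto
  finally show ?thesis by (simp add: sum.cartesian_product)
qed

lemma outdeg_pos: "i \<in> V \<Longrightarrow> outdeg E i > 0"
  using finite_subset[of "{j. (i, j) \<in> E}" V] E_subset finite_V self_loops
  by (auto simp: outdeg_def card_gt_0_iff)

lemma Mreliable_edge_pos: "(u, v) \<in> E \<Longrightarrow> Mreliable E (Inl u) (Inl v) > 0"
  using outdeg_pos E_subset by (auto simp: Mreliable_def)

lemma Mmat_row_sum:
  assumes "a \<in> Idx V E"
  shows "(\<Sum>b\<in>Idx V E. Mmat E x a b) = 1"
proof (cases a)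
  case (Inl i)
  then have i: "i \<in> V" using assms by (auto simp: Idx_def)
  let ?D = "real (outdeg E i)"
  have buffers: "(\<Sum>u\<in>V. \<Sum>v\<in>V. if (u, v) \<in> E then Mmat E x (Inl i) (Inr (u, v)) else 0)
      = (\<Sum>v\<in>V. if (i, v) \<in> E then (1 - of_bool (x (i, v))) / ?D else 0)"
  proof -
    have "(\<Sum>u\<in>V. \<Sum>v\<in>V. if (u, v) \<in> E then Mmat E x (Inl i) (Inr (u, v)) else 0)
        = (\<Sum>u\<in>V. if u = i then \<Sum>v\<in>V. if (i, v) \<in> E then (1 - of_bool (x (i, v))) / ?D else 0 else 0)"
      by (intro sum.cong) (auto cong: if_cong)
    then show ?thesis using i finite_V by simp
  qed
  have "(\<Sum>b\<in>Idx V E. Mmat E x a b) = (\<Sum>v\<in>V. if (i, v) \<in> E then 1 / ?D else 0)"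
    unfolding sum_Idx Inl buffers sum.distrib[symmetric]
    by (intro sum.cong) (auto simp: add_divide_distrib[symmetric])
  also have "\<dots> = real (card {v\<in>V. (i, v) \<in> E}) / real (outdeg E i)"
    using finite_V by (simp add: sum.If_cases Int_def conj_commute)
  also have "{v\<in>V. (i, v) \<in> E} = {v. (i, v) \<in> E}" using E_subset by auto
  finally show ?thesis using outdeg_pos[OF i] by (simp add: outdeg_def)
next
  case (Inr e)
  then obtain u v where uv: "a = Inr (u, v)" "(u, v) \<in> E" using assms by (cases e) (auto simp: Idx_def)
  then have "u \<in> V" "v \<in> V" using E_subset by auto
  moreover have "(\<Sum>u'\<in>V. \<Sum>v'\<in>V. if (u', v') \<in> E then Mmat E x a (Inr (u', v')) else 0)
      = (\<Sum>u'\<in>V. if u' = u then \<Sum>v'\<in>V. if v' = v then 1 - of_bool (x (u, v)) else 0 else 0)"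
    using uv by (intro sum.cong) (auto cong: if_cong intro: sum.cong)
  ultimately show ?thesis unfolding sum_Idx using uv finite_V by simp
qed

lemma traj_sum: "(\<Sum>b\<in>Idx V E. traj V E X y k b) = (\<Sum>a\<in>Idx V E. y a)"
  by (induction k) (simp_all add: sum_vecmat_stochastic[OF finite_Idx Mmat_row_sum])

lemma decseq_traj_l1: "decseq (\<lambda>k. \<Sum>b\<in>Idx V E. \<bar>traj V E X y k b\<bar>)"
  by (rule decseq_SucI) (simp add: l1_vecmat_stochastic_le[OF finite_Idx] Mmat_nonneg Mmat_row_sum)

lemma finite_positive_entries:
  "finite {M a b | M a b. M \<in> Mset E \<and> a \<in> Idx V E \<and> b \<in> Idx V E \<and> M a b > 0}"
proof (rule finite_subset)
  show "{M a b | M a b. M \<in> Mset E \<and> a \<in> Idx V E \<and> b \<in> Idx V E \<and> M a b > 0}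
      \<subseteq> {0, 1} \<union> (\<lambda>i. 1 / real (outdeg E i)) ` V"
    using Mmat_values by (fastforce simp: Mset_def Idx_def)
qed (use finite_V in simp)

lemma cmin_le: "M \<in> Mset E \<Longrightarrow> a \<in> Idx V E \<Longrightarrow> b \<in> Idx V E \<Longrightarrow> M a b > 0 \<Longrightarrow> cmin V E \<le> M a b"
  unfolding cmin_def by (rule Min_le[OF finite_positive_entries]) blast

lemma cmin_pos: "0 < cmin V E" and cmin_le_1: "cmin V E \<le> 1"
proof -
  obtain i where i: "i \<in> V" using V_nonempty by blast
  let ?S = "{M a b | M a b. M \<in> Mset E \<and> a \<in> Idx V E \<and> b \<in> Idx V E \<and> M a b > 0}"
  have mem: "Mreliable E (Inl i) (Inl i) \<in> ?S"
    using Mreliable_edge_pos[OF self_loops[OF i]] Inl_in_Idx[OF i] Mreliable_in_Mset by blast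
  then have "cmin V E \<in> ?S"
    unfolding cmin_def by (intro Min_in[OF finite_positive_entries]) blast
  then show "0 < cmin V E" by auto
  have "cmin V E \<le> Mreliable E (Inl i) (Inl i)"
    unfolding cmin_def by (rule Min_le[OF finite_positive_entries mem])
  also have "\<dots> \<le> 1"
    using outdeg_pos[OF i] self_loops[OF i] by (simp add: Mreliable_def)
  finally show "cmin V E \<le> 1" .
qed

abbreviation reliable_walk :: "nat \<Rightarrow> 'v idx \<Rightarrow> 'v idx \<Rightarrow> bool" where
  "reliable_walk \<equiv> pos_walk (Idx V E) (Mreliable E)"

lemma reliable_walk_extend:
  assumes "i \<in> V"
  shows "reliable_walk s a (Inl i) \<Longrightarrow> reliable_walk (Suc s) a (Inl i)"
proof (induction s arbitrary: a)
  case 0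
  then show ?case
    using Mreliable_edge_pos[OF self_loops] Inl_in_Idx assms by auto
next
  case (Suc s)
  then show ?case by auto
qed

lemma reliable_walk_from_buffer:
  assumes "i \<in> V" and walk: "reliable_walk s (Inr (u, v)) (Inl i)"
  shows "reliable_walk s (Inl v) (Inl i)"
proof (cases s)
  case (Suc s')
  then have "reliable_walk s' (Inl v) (Inl i)"
    using walk Mreliable_buffer_pos by fastforce
  then show ?thesis using reliable_walk_extend[OF assms(1)] Suc by blast
qed (use walk in simp)

text \<open>A transition of any obtainable matrix is simulated, in the same number of steps, by
  the all-reliable matrix: a packet parked in a buffer is released at once.\<close>

lemma reliable_walk_step:
  assumes i: "i \<in> V" and pos: "Mmat E x a b > 0" and walk: "reliable_walk s b (Inl i)"
  shows "reliable_walk (Suc s) a (Inl i)"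
proof -
  obtain u v where uv: "(u, v) \<in> E" "a = Inl u \<or> a = Inr (u, v)" "b = Inl v \<or> b = Inr (u, v)"
    using Mmat_pos_cases[OF pos] by blast
  have "reliable_walk s (Inl v) (Inl i)"
    using uv(3) walk reliable_walk_from_buffer[OF i] by blast
  moreover have "Mreliable E a (Inl v) > 0"
    using uv(1,2) Mreliable_edge_pos Mreliable_buffer_release[OF uv(1)] by auto
  moreover have "Inl v \<in> Idx V E" using uv(1) E_subset Inl_in_Idx by blast
  ultimately show ?thesis by auto
qed

lemma reliable_walk_of_matprod:
  assumes i: "i \<in> V"
  shows "set Ms \<subseteq> Mset E \<Longrightarrow> matprod_list (Idx V E) Ms a (Inl i) > 0
    \<Longrightarrow> reliable_walk (length Ms) a (Inl i)"
proof (induction Ms arbitrary: a)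
  case Nil
  then show ?case by (simp add: matprod_list_def idmat_def split: if_splits)
next
  case (Cons M Ms)
  obtain x where M: "M = Mmat E x" using Cons.prems by (auto simp: Mset_def)
  have "0 < (\<Sum>c\<in>Idx V E. M a c * matprod_list (Idx V E) Ms c (Inl i))"
    using Cons.prems by (simp add: matprod_list_def matmul_def)
  then obtain c where "c \<in> Idx V E" "M a c * matprod_list (Idx V E) Ms c (Inl i) > 0"
    by (meson linorder_not_less sum_nonpos)
  moreover have "M a c \<ge> 0" "matprod_list (Idx V E) Ms c (Inl i) \<ge> 0"
    using M Mmat_nonneg matprod_list_nonneg Cons.prems(1) by auto
  ultimately have "M a c > 0" "matprod_list (Idx V E) Ms c (Inl i) > 0"
    by (auto simp: zero_less_mult_iff)
  then show ?case using Cons reliable_walk_step[OF i] M by auto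
qed

lemma reliable_walk_lower_bound:
  assumes "reliable_walk s a b" "a \<in> Idx V E" "\<forall>a\<in>Idx V E. y a \<ge> 0"
  shows "traj V E (\<lambda>_ _. True) y s b \<ge> cmin V E ^ s * y a"
  using assms
proof (induction s arbitrary: y a)
  case 0
  then show ?case by simp
next
  case (Suc s)
  obtain a' where a': "a' \<in> Idx V E" "Mreliable E a a' > 0" "reliable_walk s a' b"
    using Suc.prems(1) by auto
  define y' where "y' = vecmat (Idx V E) y (Mreliable E)"
  have y'_nonneg: "\<forall>a\<in>Idx V E. y' a \<ge> 0"
    using Suc.prems(3) by (auto simp: y'_def vecmat_def Mreliable_def Mmat_nonneg intro!: sum_nonneg)
  have "cmin V E * y a \<le> y a * Mreliable E a a'"
    using cmin_le[OF Mreliable_in_Mset Suc.prems(2) a'(1,2)] Suc.prems(2,3)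
    by (simp add: mult.commute mult_left_mono)
  also have "\<dots> \<le> y' a'"
    unfolding y'_def vecmat_def using Suc.prems(2,3) finite_Idx
    by (intro member_le_sum) (auto simp: Mreliable_def Mmat_nonneg)
  finally have "cmin V E ^ Suc s * y a \<le> cmin V E ^ s * y' a'"
    using cmin_pos by (simp add: mult.assoc mult_left_mono)
  also have "\<dots> \<le> traj V E (\<lambda>_ _. True) y' s b"
    using Suc.IH[OF a'(3,1) y'_nonneg] .
  also have "\<dots> = traj V E (\<lambda>_ _. True) y (Suc s) b"
    using traj_shift[of V E "\<lambda>_ _. True" y 1 s] by (simp add: y'_def Mreliable_def)
  finally show ?case .
qed

context
  fixes l :: nat
  assumes mixing: "\<forall>i\<in>V. \<exists>Ms. length Ms = l \<and> set Ms \<subseteq> Mset E \<and>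
                    (\<forall>a\<in>Idx V E. matprod_list (Idx V E) Ms a (Inl i) > 0)"
begin

lemma reliable_walk_everywhere: "i \<in> V \<Longrightarrow> a \<in> Idx V E \<Longrightarrow> reliable_walk l a (Inl i)"
  using mixing reliable_walk_of_matprod by metis

lemma reliable_window_spread:
  assumes i: "i \<in> V" and y: "\<forall>a\<in>Idx V E. y a \<ge> 0"
  shows "traj V E (\<lambda>_ _. True) y l (Inl i)
           \<ge> cmin V E ^ l / real (card (Idx V E)) * (\<Sum>a\<in>Idx V E. y a)"
proof -
  let ?n = "real (card (Idx V E))"
  obtain a where a: "a \<in> Idx V E" "y a = Max (y ` Idx V E)"
    using Max_in[of "y ` Idx V E"] finite_Idx card_Idx_pos by fastforce
  have "(\<Sum>a\<in>Idx V E. y a) \<le> ?n * y a"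
    using a(2) finite_Idx by (intro sum_bounded_above) simp
  then have "cmin V E ^ l / ?n * (\<Sum>a\<in>Idx V E. y a) \<le> cmin V E ^ l * y a"
    using cmin_pos card_Idx_pos by (simp add: field_simps mult_left_mono)
  also have "\<dots> \<le> traj V E (\<lambda>_ _. True) y l (Inl i)"
    by (rule reliable_walk_lower_bound[OF reliable_walk_everywhere[OF i a(1)] a(1) y])
  finally show ?thesis .
qed

lemma reliable_window_contraction:
  assumes "(\<Sum>a\<in>Idx V E. w a) = 0"
  shows "(\<Sum>b\<in>Idx V E. \<bar>traj V E (\<lambda>_ _. True) w l b\<bar>)
           \<le> (1 - cmin V E ^ l / real (card (Idx V E))) * (\<Sum>a\<in>Idx V E. \<bar>w a\<bar>)"
proof -
  obtain i where i: "i \<in> V" using V_nonempty by blast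
  show ?thesis
  proof (rule l1_contraction_of_zero_sum[OF finite_Idx Inl_in_Idx[OF i] _ _ _ _ assms])
    show "traj V E (\<lambda>_ _. True) (\<lambda>a. u a - v a) l
        = (\<lambda>b. traj V E (\<lambda>_ _. True) u l b - traj V E (\<lambda>_ _. True) v l b)" for u v
      using traj_linear[of V E _ u 1 v l] by simp
  qed (use traj_sum traj_nonneg reliable_window_spread[OF i] in auto)
qed

lemma threshold_reached_infinitely_often:
  assumes W: "infinite (reliable_windows E l X)" and i: "i \<in> V"
    and z0: "\<forall>a\<in>Idx V E. z0 a \<ge> 0" and \<mu>: "\<mu> \<le> (\<Sum>a\<in>Idx V E. z0 a)"
  shows "infinite {k. traj V E X z0 k (Inl i) \<ge> \<mu> * cmin V E ^ l / real (card (Idx V E))}"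
    (is "infinite ?S")
proof -
  have "k + l \<in> ?S" if "k \<in> reliable_windows E l X" for k
  proof -
    have "\<mu> * cmin V E ^ l / real (card (Idx V E))
        \<le> cmin V E ^ l / real (card (Idx V E)) * (\<Sum>a\<in>Idx V E. traj V E X z0 k a)"
      using \<mu> cmin_pos card_Idx_pos by (simp add: traj_sum field_simps mult_left_mono)
    also have "\<dots> \<le> traj V E X z0 (k + l) (Inl i)"
      using reliable_window_spread[OF i] traj_nonneg[OF z0] traj_reliable_window[OF that] by simp
    finally show ?thesis by simp
  qed
  then have "(\<lambda>k. k + l) ` reliable_windows E l X \<subseteq> ?S" by blast
  moreover have "infinite ((\<lambda>k. k + l) ` reliable_windows E l X)"
    using W by (simp add: finite_image_iff)
  ultimately show ?thesis using infinite_super by blast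
qed

lemma traj_l1_tendsto_zero:
  assumes W: "infinite (reliable_windows E l X)" and w0: "(\<Sum>a\<in>Idx V E. w0 a) = 0"
  shows "(\<lambda>k. \<Sum>b\<in>Idx V E. \<bar>traj V E X w0 k b\<bar>) \<longlonglongrightarrow> 0"
proof (rule tendsto_zero_if_contracts_infinitely_often[OF decseq_traj_l1])
  let ?\<rho> = "1 - cmin V E ^ l / real (card (Idx V E))"
  have "0 < cmin V E ^ l" "cmin V E ^ l \<le> 1" "1 \<le> real (card (Idx V E))"
    using cmin_pos cmin_le_1 card_Idx_pos by (auto simp: power_le_one)
  then show "0 \<le> ?\<rho>" "?\<rho> < 1" by (auto simp: field_simps)
  have "(\<Sum>b\<in>Idx V E. \<bar>traj V E X w0 (k + l) b\<bar>) \<le> ?\<rho> * (\<Sum>b\<in>Idx V E. \<bar>traj V E X w0 k b\<bar>)"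
    if "k \<in> reliable_windows E l X" for k
    unfolding traj_reliable_window[OF that]
    by (rule reliable_window_contraction) (simp add: traj_sum w0)
  then have "reliable_windows E l X
      \<subseteq> {k. (\<Sum>b\<in>Idx V E. \<bar>traj V E X w0 (k + l) b\<bar>) \<le> ?\<rho> * (\<Sum>b\<in>Idx V E. \<bar>traj V E X w0 k b\<bar>)}"
    by blast
  then show "infinite {k. (\<Sum>b\<in>Idx V E. \<bar>traj V E X w0 (k + l) b\<bar>)
      \<le> ?\<rho> * (\<Sum>b\<in>Idx V E. \<bar>traj V E X w0 k b\<bar>)}"
    using W infinite_super by blast
qed (simp add: sum_nonneg)

lemma traj_tendsto_ratio_of_sums:
  assumes W: "infinite (reliable_windows E l X)" and i: "i \<in> V"
    and z0: "(\<Sum>a\<in>Idx V E. z0 a) \<noteq> 0"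
  shows "(\<lambda>k. traj V E X y0 k (Inl i)
            - (\<Sum>a\<in>Idx V E. y0 a) / (\<Sum>a\<in>Idx V E. z0 a) * traj V E X z0 k (Inl i))
          \<longlonglongrightarrow> 0" (is "(\<lambda>k. _ - ?\<pi> * _) \<longlonglongrightarrow> 0")
proof -
  define w0 where "w0 = (\<lambda>a. y0 a - ?\<pi> * z0 a)"
  have "(\<Sum>a\<in>Idx V E. w0 a) = 0"
    using z0 unfolding w0_def sum_subtractf by (subst sum_distrib_left[symmetric]) simp
  then have l1: "(\<lambda>k. \<Sum>b\<in>Idx V E. \<bar>traj V E X w0 k b\<bar>) \<longlonglongrightarrow> 0"
    by (rule traj_l1_tendsto_zero[OF W])
  have "norm (traj V E X y0 k (Inl i) - ?\<pi> * traj V E X z0 k (Inl i))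
      \<le> (\<Sum>b\<in>Idx V E. \<bar>traj V E X w0 k b\<bar>)" for k
  proof -
    have "norm (traj V E X y0 k (Inl i) - ?\<pi> * traj V E X z0 k (Inl i)) = \<bar>traj V E X w0 k (Inl i)\<bar>"
      unfolding w0_def traj_linear by simp
    also have "\<dots> \<le> (\<Sum>b\<in>Idx V E. \<bar>traj V E X w0 k b\<bar>)"
      using finite_Idx Inl_in_Idx[OF i] by (intro member_le_sum) auto
    finally show ?thesis .
  qed
  then show ?thesis by (intro Lim_null_comparison[OF always_eventually l1]) blast
qed

end

end

lemma (in prob_space) AE_infinitely_many_reliable_windows:
  fixes X :: "'a \<Rightarrow> nat \<Rightarrow> ('v \<times> 'v) \<Rightarrow> bool" and q :: "('v \<times> 'v) \<Rightarrow> real"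
  assumes finite_E: "finite E" and q_pos: "\<forall>e\<in>E. 0 < q e"
    and indep: "indep_vars (\<lambda>_. count_space UNIV) (\<lambda>(k, e) \<omega>. X \<omega> k e) ({1..} \<times> E)"
    and prob_X: "\<forall>k\<ge>1. \<forall>e\<in>E. prob {\<omega> \<in> space M. X \<omega> k e} = q e"
  shows "AE \<omega> in M. infinite (reliable_windows E l (X \<omega>))"
proof (cases "l = 0 \<or> E = {}")
  case True
  then show ?thesis by (auto simp: reliable_windows_def)
next
  case False
  \<comment> \<open>the disjoint blocks \<open>{j l + 1 .. j l + l}\<close> of time steps are reliable independently\<close>
  define K where "K j = {j * l + 1 .. j * l + l} \<times> E" for j
  have K_block: "(k - 1) div l = j" if "(k, e) \<in> K j" for k e j
    using that False by (intro div_nat_eqI) (auto simp: K_def mult.commute)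
  have K: "K j \<subseteq> {1..} \<times> E" "finite (K j)" "K j \<noteq> {}" for j
    using False finite_E by (auto simp: K_def)
  have "disjoint_family K"
    unfolding disjoint_family_on_def
  proof (intro ballI impI)
    fix m n :: nat assume "m \<noteq> n"
    then show "K m \<inter> K n = {}" by (auto dest!: K_block)
  qed
  then have "indep_events (\<lambda>j. {\<omega>\<in>space M. \<forall>(k, e)\<in>K j. X \<omega> k e}) UNIV"
    using indep_events_all_on_blocks[OF indep K(1,2)] by (simp add: case_prod_beta)
  moreover have "prob {\<omega>\<in>space M. \<forall>(k, e)\<in>K j. X \<omega> k e} = (\<Prod>e\<in>E. q e) ^ l" for j
  proof -
    have "prob {\<omega>\<in>space M. \<forall>(k, e)\<in>K j. X \<omega> k e} = (\<Prod>(k, e)\<in>K j. q e)"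
      using prob_all_indep_vars[OF indep K(1-3)] prob_X
      by (auto simp: case_prod_beta intro!: prod.cong) (auto simp: K_def)
    also have "\<dots> = (\<Prod>e\<in>E. q e) ^ l"
      by (simp add: K_def prod.cartesian_product[symmetric])
    finally show ?thesis .
  qed
  moreover have "(\<Prod>e\<in>E. q e) ^ l > 0" using q_pos by (simp add: prod_pos)
  ultimately have "AE \<omega> in M. infinite {j. \<forall>(k, e)\<in>K j. X \<omega> k e}"
    by (intro AE_infinitely_often_indep_events) auto
  then show ?thesis
  proof eventually_elim
    case (elim \<omega>)
    have "(\<lambda>j. j * l) ` {j. \<forall>(k, e)\<in>K j. X \<omega> k e} \<subseteq> reliable_windows E l (X \<omega>)"
      by (auto simp: K_def reliable_windows_def)
    moreover have "inj (\<lambda>j. j * l)" using False by (auto simp: inj_def)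
    ultimately show ?case
      using elim by (meson finite_imageD finite_subset inj_on_subset subset_UNIV)
  qed
qed

theorem theorem1:
  fixes V :: "'v set" and E :: "('v \<times> 'v) set"
    and q :: "('v \<times> 'v) \<Rightarrow> real"
    and M :: "'a measure" and X :: "'a \<Rightarrow> nat \<Rightarrow> ('v \<times> 'v) \<Rightarrow> bool"
    and y0 z0 :: "'v idx \<Rightarrow> real" and \<mu>z :: real and l :: nat
  assumes finV: "finite V" and neV: "V \<noteq> {}"
    and EV: "E \<subseteq> V \<times> V"
    and selfloops: "\<forall>i\<in>V. (i, i) \<in> E"
    and strongly_connected: "\<forall>i\<in>V. \<forall>j\<in>V. (i, j) \<in> E\<^sup>*"
    and q_range: "\<forall>e\<in>E. 0 < q e \<and> q e \<le> 1"
    and P: "prob_space M"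
    and X_rv: "\<forall>k e. (\<lambda>\<omega>. X \<omega> k e) \<in> measurable M (count_space UNIV)"
    and X_indep: "prob_space.indep_vars M (\<lambda>_. count_space UNIV)
                     (\<lambda>(k, e) \<omega>. X \<omega> k e) ({1..} \<times> E)"
    and X_prob: "\<forall>k\<ge>1. \<forall>e\<in>E. measure M {\<omega> \<in> space M. X \<omega> k e} = q e"
    and y0_nonneg: "\<forall>i\<in>V. y0 (Inl i) \<ge> 0" and z0_nonneg: "\<forall>i\<in>V. z0 (Inl i) \<ge> 0"
    and y0_buf: "\<forall>e\<in>E. y0 (Inr e) = 0" and z0_buf: "\<forall>e\<in>E. z0 (Inr e) = 0"
    and z0_pos: "(\<Sum>j\<in>Idx V E. z0 j) > 0"
    and \<mu>z: "0 < \<mu>z" "\<mu>z \<le> (\<Sum>j\<in>Idx V E. z0 j)"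
    and l_pos: "l > 0"
    and l_prop: "\<forall>i\<in>V. \<exists>Ms. length Ms = l \<and> set Ms \<subseteq> Mset E \<and>
                    (\<forall>a\<in>Idx V E. matprod_list (Idx V E) Ms a (Inl i) > 0)"
  shows "\<forall>i\<in>V. AE \<omega> in M.
           (let y = traj V E (X \<omega>) y0; z = traj V E (X \<omega>) z0;
                \<mu> = \<mu>z * cmin V E ^ l / real (card (Idx V E));
                S = {k. z k (Inl i) \<ge> \<mu>};
                \<tau> = enumerate S
            in infinite S \<and>
               (\<lambda>t. y (\<tau> t) (Inl i) / z (\<tau> t) (Inl i))
                 \<longlonglongrightarrow> (\<Sum>j\<in>Idx V E. y0 j) / (\<Sum>j\<in>Idx V E. z0 j))"
  \<comment> \<open>Strong connectivity enters only through the hypothesis on \<open>l\<close>. Not needed: the signs of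
    \<open>y\<^sub>0\<close>, \<open>q \<le> 1\<close>, \<open>l > 0\<close>, and measurability of \<open>X\<close> (implied by independence).\<close>
proof -
  interpret lossy_network V E
    using finV neV EV selfloops by unfold_locales auto
  interpret prob_space M by (rule P)
  have z0_Idx_nonneg: "\<forall>a\<in>Idx V E. z0 a \<ge> 0"
    using z0_nonneg z0_buf by (auto simp: Idx_def)
  let ?\<mu> = "\<mu>z * cmin V E ^ l / real (card (Idx V E))"
  have \<mu>_pos: "0 < ?\<mu>" using \<mu>z(1) cmin_pos card_Idx_pos by simp
  have windows: "AE \<omega> in M. infinite (reliable_windows E l (X \<omega>))"
    using finite_E q_range X_indep X_prob by (intro AE_infinitely_many_reliable_windows) auto
  have "infinite S \<and>
      (\<lambda>t. traj V E (X \<omega>) y0 (enumerate S t) (Inl i) / traj V E (X \<omega>) z0 (enumerate S t) (Inl i))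
        \<longlonglongrightarrow> (\<Sum>j\<in>Idx V E. y0 j) / (\<Sum>j\<in>Idx V E. z0 j)"
    if i: "i \<in> V" and W: "infinite (reliable_windows E l (X \<omega>))"
      and S: "S = {k. traj V E (X \<omega>) z0 k (Inl i) \<ge> ?\<mu>}" for i \<omega> S
  proof
    show "infinite S"
      unfolding S by (rule threshold_reached_infinitely_often[OF l_prop W i z0_Idx_nonneg \<mu>z(2)])
    then show "(\<lambda>t. traj V E (X \<omega>) y0 (enumerate S t) (Inl i) / traj V E (X \<omega>) z0 (enumerate S t) (Inl i))
        \<longlonglongrightarrow> (\<Sum>j\<in>Idx V E. y0 j) / (\<Sum>j\<in>Idx V E. z0 j)"
      using traj_tendsto_ratio_of_sums[OF l_prop W i] z0_pos S
      by (intro tendsto_ratio_along_enumerate[OF _ \<mu>_pos]) auto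
  qed
  then show ?thesis using windows by (auto simp: Let_def elim!: eventually_mono)
qed

end
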